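(* Let $\theta:\mathbb{A}\to\mathbb{A}^\lambda$ be a primitive substitution satisfying the standing assumptions with $c(\theta)=1$, and let $u=\theta(u)$ be its fixed point. Then $u$ is Weyl rationally almost periodic, and the approximating periodic sequences can be chosen with period $\lambda^k$: for every $\varepsilon>0$ there exist $k\ge1$ and a $\lambda^k$-periodic $w\in\mathbb{A}^{\mathbb{N}}$ with $d_W(u,w)<\varepsilon$.
   Context: Substitution $\theta:\mathbb{A}\to\mathbb{A}^\lambda$, $\lambda\ge2$, with iterates $\theta^k$; primitive: some $\theta^k(a)$ contains all letters for every $a$. Standing assumptions: $\theta(a_0)_0=a_0$, $\theta$ injective on letters, subshift infinite; $u$ the fixed point with $u[0]=a_0$. Column number $c(\theta)=\min_{k\ge1,0\le j<\lambda^k}|\{\theta^k(a)_j:a\in\mathbb{A}\}|$. Weyl pseudo-metric: $d_W(x,y)=\limsup_{N\to\infty}\sup_{\ell\ge0}\frac1N|\{\ell\le n<\ell+N:x[n]\ne y[n]\}|$; $x$ is Weyl rationally almost periodic if it is a $d_W$-limit of periodic sequences over the same alphabet. *)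

theory Defs
  imports "HOL-Analysis.Analysis" "HOL-Library.Liminf_Limsup"
begin

text \<open>A substitution of constant length lam over the finite alphabet 'a is
  a map th :: 'a => nat => 'a, where th a j (j < lam) is the j-th letter of th(a).\<close>

fun sub_iter :: "('a \<Rightarrow> nat \<Rightarrow> 'a) \<Rightarrow> nat \<Rightarrow> nat \<Rightarrow> 'a \<Rightarrow> nat \<Rightarrow> 'a" where
  "sub_iter th lam 0 a = (\<lambda>j. a)"
| "sub_iter th lam (Suc k) a = (\<lambda>j. th (sub_iter th lam k a (j div lam)) (j mod lam))"

definition primitive :: "('a \<Rightarrow> nat \<Rightarrow> 'a) \<Rightarrow> nat \<Rightarrow> bool" where
  "primitive th lam \<longleftrightarrow>
     (\<exists>k\<ge>1. \<forall>a b. \<exists>j<lam^k. sub_iter th lam k a j = b)"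

definition inj_letters :: "('a \<Rightarrow> nat \<Rightarrow> 'a) \<Rightarrow> nat \<Rightarrow> bool" where
  "inj_letters th lam \<longleftrightarrow> (\<forall>a b. (\<forall>j<lam. th a j = th b j) \<longrightarrow> a = b)"

definition sub_language :: "('a \<Rightarrow> nat \<Rightarrow> 'a) \<Rightarrow> nat \<Rightarrow> 'a list set" where
  "sub_language th lam = {w. \<exists>k a i. i + length w \<le> lam^k \<and>
       w = map (\<lambda>j. sub_iter th lam k a (i + j)) [0..<length w]}"

definition subshift :: "('a \<Rightarrow> nat \<Rightarrow> 'a) \<Rightarrow> nat \<Rightarrow> (nat \<Rightarrow> 'a) set" where
  "subshift th lam = {x. \<forall>n m. map (\<lambda>j. x (n + j)) [0..<m] \<in> sub_language th lam}"

definition column_number :: "('a \<Rightarrow> nat \<Rightarrow> 'a) \<Rightarrow> nat \<Rightarrow> nat" where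
  "column_number th lam = (LEAST c. \<exists>k\<ge>1. \<exists>j<lam^k.
       card (range (\<lambda>a. sub_iter th lam k a j)) = c)"

definition weyl_dist :: "(nat \<Rightarrow> 'a) \<Rightarrow> (nat \<Rightarrow> 'a) \<Rightarrow> ereal" where
  "weyl_dist x y = limsup (\<lambda>N. ereal (SUP l. real (card {n. l \<le> n \<and> n < l + N \<and> x n \<noteq> y n}) / real N))"

definition periodic_seq :: "(nat \<Rightarrow> 'a) \<Rightarrow> nat \<Rightarrow> bool" where
  "periodic_seq w p \<longleftrightarrow> p > 0 \<and> (\<forall>n. w (n + p) = w n)"

definition weyl_rap :: "(nat \<Rightarrow> 'a) \<Rightarrow> bool" where
  "weyl_rap x \<longleftrightarrow> (\<forall>\<epsilon>>0. \<exists>w p. periodic_seq w p \<and> weyl_dist x w < ereal \<epsilon>)"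

end

theory Submission
  imports Defs
begin

text \<open>Since \<open>c(\<theta>) = 1\<close> there is a column \<open>j\<close> of \<open>\<theta>\<^sup>k\<close> at which every
  \<open>\<theta>\<^sup>k(a)\<close> shows the same letter \<open>b\<close>. Writing \<open>n\<close> in base \<open>L = \<lambda>\<^sup>k\<close>, the
  fixed point gives \<open>u[n] = \<theta>\<^sup>k\<^sup>i(b)[n mod L\<^sup>i]\<close> as soon as the \<open>i\<close>-th digit
  of \<open>n\<close> is \<open>j\<close>. Hence \<open>u\<close> coincides with its \<open>L\<^sup>M\<close>-periodic truncation
  \<open>n \<mapsto> u[n mod L\<^sup>M]\<close> except at positions whose last \<open>M\<close> digits all avoid \<open>j\<close>;
  these have density at most \<open>((L - 1)/L)\<^sup>M\<close> in every window, uniformly, which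
  bounds the Weyl distance.\<close>

lemma fixed_point_block:
  assumes "lam > 0"
    and fixed: "\<forall>n j. j < lam \<longrightarrow> u (lam * n + j) = th (u n) j"
    and "r < lam ^ K"
  shows "u (lam ^ K * q + r) = sub_iter th lam K (u q) r"
  using assms(3)
proof (induction K arbitrary: r)
  case 0
  then show ?case by simp
next
  case (Suc K)
  have split: "lam ^ Suc K * q + r = lam * (lam ^ K * q + r div lam) + r mod lam"
    by (simp add: algebra_simps)
  have "r div lam < lam ^ K"
    using Suc.prems \<open>lam > 0\<close> by (simp add: div_less_iff_less_mult mult.commute)
  then show ?case
    unfolding split using fixed \<open>lam > 0\<close> Suc.IH by simp
qed

lemma column_number_oneE:
  assumes "lam > 0" and "column_number th lam = 1"
  obtains k j b where "k \<ge> 1" "j < lam ^ k" "\<And>a. sub_iter th lam k a j = b"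
proof -
  define Q where "Q c \<longleftrightarrow> (\<exists>k\<ge>1. \<exists>j<lam ^ k. card (range (\<lambda>a. sub_iter th lam k a j)) = c)"
    for c
  have "Q (card (range (\<lambda>a. sub_iter th lam 1 a 0)))"
    unfolding Q_def using \<open>lam > 0\<close> by (intro exI[of _ 1] conjI exI[of _ 0]) auto
  then have "Q (LEAST c. Q c)" by (rule LeastI)
  then obtain k j where "k \<ge> 1" "j < lam ^ k"
    and "card (range (\<lambda>a. sub_iter th lam k a j)) = 1"
    using assms(2) unfolding column_number_def Q_def by auto
  moreover from this(3) obtain b where "range (\<lambda>a. sub_iter th lam k a j) = {b}"
    by (metis card_1_singletonE)
  ultimately show thesis
    using that by (metis rangeI singletonD)
qed

lemma digit_of_mod_power:
  fixes n L :: nat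
  assumes "i < M"
  shows "(n mod L ^ M div L ^ i) mod L = (n div L ^ i) mod L"
proof -
  have LM: "L ^ M = L ^ i * L ^ (M - i)"
    using assms by (simp add: power_add[symmetric])
  have "n mod (a * c) div a = n div a mod c" for a c :: nat
    by (cases "a = 0") (simp_all add: mod_mult2_eq)
  then have "n mod L ^ M div L ^ i = (n div L ^ i) mod L ^ (M - i)"
    unfolding LM .
  moreover have "L dvd L ^ (M - i)"
    using assms by simp
  ultimately show ?thesis by (simp add: mod_mod_cancel)
qed

text \<open>The digit \<open>j\<close> of \<open>n\<close> at position \<open>i\<close> (base \<open>\<lambda>\<^sup>k\<close>) sits inside a block
  \<open>\<theta>\<^sup>k(u[q])\<close> at the constant column, so it is the letter \<open>b\<close>, and the block
  \<open>\<theta>\<^sup>k\<^sup>i(b)\<close> generated by it contains position \<open>n\<close>.\<close>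

lemma fixed_point_at_constant_digit:
  assumes "lam > 0"
    and fixed: "\<forall>n j. j < lam \<longrightarrow> u (lam * n + j) = th (u n) j"
    and column: "j < lam ^ k" "\<And>a. sub_iter th lam k a j = b"
    and digit: "(n div lam ^ (k * i)) mod lam ^ k = j"
  shows "u n = sub_iter th lam (k * i) b (n mod lam ^ (k * i))"
proof -
  define m where "m = n div lam ^ (k * i)"
  have "m = lam ^ k * (m div lam ^ k) + j"
    using digit unfolding m_def by (metis div_mult_mod_eq mult.commute)
  then have "u m = b"
    using fixed_point_block[OF \<open>lam > 0\<close> fixed column(1), of "m div lam ^ k"] column(2)
    by simp
  moreover have "n = lam ^ (k * i) * m + n mod lam ^ (k * i)"
    unfolding m_def by simp
  ultimately show ?thesis
    using fixed_point_block[OF \<open>lam > 0\<close> fixed, of "n mod lam ^ (k * i)" "k * i" m] \<open>lam > 0\<close>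
    by simp
qed

definition digits_avoiding :: "nat \<Rightarrow> nat \<Rightarrow> nat \<Rightarrow> nat set" where
  "digits_avoiding L j M = {r. r < L ^ M \<and> (\<forall>i<M. (r div L ^ i) mod L \<noteq> j)}"

lemma finite_digits_avoiding: "finite (digits_avoiding L j M)"
  unfolding digits_avoiding_def by simp

lemma card_digits_avoiding_le:
  assumes "j < L"
  shows "card (digits_avoiding L j M) \<le> (L - 1) ^ M"
proof (induction M)
  case 0
  have "digits_avoiding L j 0 = {0}"
    unfolding digits_avoiding_def by auto
  then show ?case by simp
next
  case (Suc M)
  let ?D = "{d. d < L \<and> d \<noteq> j}"
  have "digits_avoiding L j (Suc M) \<subseteq> (\<lambda>(d, s). d + L * s) ` (?D \<times> digits_avoiding L j M)"
  proof
    fix r assume r: "r \<in> digits_avoiding L j (Suc M)"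
    have "(r div L ^ 0) mod L \<noteq> j"
      using r unfolding digits_avoiding_def by blast
    then have "r mod L \<in> ?D"
      using assms by simp
    moreover have "r div L \<in> digits_avoiding L j M"
      using r assms
      by (auto simp: digits_avoiding_def div_less_iff_less_mult mult.commute div_mult2_eq)
    ultimately show "r \<in> (\<lambda>(d, s). d + L * s) ` (?D \<times> digits_avoiding L j M)"
      by (intro image_eqI[of _ _ "(r mod L, r div L)"]) auto
  qed
  moreover have fin: "finite (?D \<times> digits_avoiding L j M)"
    by (simp add: finite_digits_avoiding)
  ultimately have "card (digits_avoiding L j (Suc M)) \<le>
      card ((\<lambda>(d, s). d + L * s) ` (?D \<times> digits_avoiding L j M))"
    by (intro card_mono finite_imageI)
  also have "\<dots> \<le> card (?D \<times> digits_avoiding L j M)"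
    using fin by (rule card_image_le)
  also have "\<dots> = card ?D * card (digits_avoiding L j M)"
    by (rule card_cartesian_product)
  also have "card ?D = L - 1"
  proof -
    have "?D = {..<L} - {j}" by auto
    then show ?thesis using assms by simp
  qed
  finally have "card (digits_avoiding L j (Suc M)) \<le> (L - 1) * card (digits_avoiding L j M)" .
  then show ?case
    using Suc.IH by (metis le_trans mult_le_mono2 power_Suc)
qed

lemma mod_eq_imp_eq_within_period:
  fixes x y P :: nat
  assumes "x \<le> y" "y < x + P" "x mod P = y mod P"
  shows "x = y"
proof -
  obtain s where "y = x + P * s"
    using mod_eq_nat2E[OF assms(3,1)] .
  then show ?thesis
    using assms(2) by (cases s) auto
qed

lemma card_period_window_mod_le:
  fixes l P :: nat
  assumes "finite B"
  shows "card {n. l \<le> n \<and> n < l + P \<and> n mod P \<in> B} \<le> card B"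
proof (rule card_inj_on_le[where f = "\<lambda>n. n mod P"])
  show "inj_on (\<lambda>n. n mod P) {n. l \<le> n \<and> n < l + P \<and> n mod P \<in> B}"
  proof (rule inj_onI)
    fix x y
    assume "x \<in> {n. l \<le> n \<and> n < l + P \<and> n mod P \<in> B}"
      and "y \<in> {n. l \<le> n \<and> n < l + P \<and> n mod P \<in> B}" and "x mod P = y mod P"
    then show "x = y"
      using mod_eq_imp_eq_within_period[of x y P] mod_eq_imp_eq_within_period[of y x P]
      by (cases "x \<le> y") auto
  qed
qed (use assms in auto)

lemma card_window_mod_le:
  fixes l c P :: nat
  assumes "finite B"
  shows "card {n. l \<le> n \<and> n < l + c * P \<and> n mod P \<in> B} \<le> c * card B"
proof (induction c arbitrary: l)
  case 0
  then show ?case by simp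
next
  case (Suc c)
  have "{n. l \<le> n \<and> n < l + Suc c * P \<and> n mod P \<in> B} \<subseteq>
      {n. l \<le> n \<and> n < l + P \<and> n mod P \<in> B} \<union>
      {n. l + P \<le> n \<and> n < (l + P) + c * P \<and> n mod P \<in> B}"
    by auto
  then have "card {n. l \<le> n \<and> n < l + Suc c * P \<and> n mod P \<in> B} \<le>
      card ({n. l \<le> n \<and> n < l + P \<and> n mod P \<in> B} \<union>
        {n. l + P \<le> n \<and> n < (l + P) + c * P \<and> n mod P \<in> B})"
    by (rule card_mono[rotated]) auto
  also have "\<dots> \<le> card {n. l \<le> n \<and> n < l + P \<and> n mod P \<in> B} +
      card {n. l + P \<le> n \<and> n < (l + P) + c * P \<and> n mod P \<in> B}"
    by (rule card_Un_le)
  finally show ?case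
    using card_period_window_mod_le[OF assms, of l P] Suc.IH[of "l + P"] by simp
qed

lemma card_defect_window_le:
  fixes P l N :: nat
  assumes "P > 0" "finite B" and defects: "\<And>n. x n \<noteq> y n \<Longrightarrow> n mod P \<in> B"
  shows "card {n. l \<le> n \<and> n < l + N \<and> x n \<noteq> y n} \<le> (N div P + 1) * card B"
proof -
  have "(N div P + 1) * P = N div P * P + P"
    by simp
  then have "N < (N div P + 1) * P"
    using div_mult_mod_eq[of N P] mod_less_divisor[OF \<open>P > 0\<close>, of N] by linarith
  then have "{n. l \<le> n \<and> n < l + N \<and> x n \<noteq> y n} \<subseteq>
      {n. l \<le> n \<and> n < l + (N div P + 1) * P \<and> n mod P \<in> B}"
    using defects by auto
  then have "card {n. l \<le> n \<and> n < l + N \<and> x n \<noteq> y n} \<le>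
      card {n. l \<le> n \<and> n < l + (N div P + 1) * P \<and> n mod P \<in> B}"
    by (rule card_mono[rotated]) auto
  also have "\<dots> \<le> (N div P + 1) * card B"
    using \<open>finite B\<close> by (rule card_window_mod_le)
  finally show ?thesis .
qed

lemma weyl_dist_le_of_defects_mod:
  fixes P :: nat
  assumes "P > 0" "finite B" and defects: "\<And>n. x n \<noteq> y n \<Longrightarrow> n mod P \<in> B"
  shows "weyl_dist x y \<le> ereal (card B / P)"
proof -
  have window_density: "(SUP l. real (card {n. l \<le> n \<and> n < l + N \<and> x n \<noteq> y n}) / real N)
      \<le> card B / P + card B / N" for N :: nat
  proof (rule cSUP_least)
    fix l
    have "real (card {n. l \<le> n \<and> n < l + N \<and> x n \<noteq> y n}) \<le> real ((N div P + 1) * card B)"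
      using card_defect_window_le[OF assms, where l = l and N = N] by (simp only: of_nat_le_iff)
    also have "\<dots> = (real (N div P) + 1) * card B"
      by (simp add: algebra_simps)
    also have "\<dots> \<le> (real N / real P + 1) * card B"
      by (intro mult_right_mono add_right_mono of_nat_div_le_of_nat) simp
    finally have "real (card {n. l \<le> n \<and> n < l + N \<and> x n \<noteq> y n}) / real N
        \<le> (real N / real P + 1) * card B / real N"
      by (rule divide_right_mono) simp
    also have "\<dots> \<le> card B / P + card B / N"
      using \<open>P > 0\<close> by (cases "N = 0") (simp_all add: field_simps)
    finally show "real (card {n. l \<le> n \<and> n < l + N \<and> x n \<noteq> y n}) / real N
        \<le> card B / P + card B / N" .
  qed simp
  have "(\<lambda>N. card B / P + card B / real N) \<longlonglongrightarrow> card B / P + 0"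
    by (intro tendsto_add tendsto_const lim_const_over_n)
  then have "limsup (\<lambda>N. ereal (card B / P + card B / real N)) = ereal (card B / P)"
    by (intro lim_imp_Limsup) (simp_all add: lim_ereal)
  moreover have "weyl_dist x y \<le> limsup (\<lambda>N. ereal (card B / P + card B / real N))"
    unfolding weyl_dist_def by (rule Limsup_mono) (use window_density in auto)
  ultimately show ?thesis by simp
qed

lemma fixed_point_eq_at_truncation:
  assumes "lam > 0"
    and fixed: "\<forall>n j. j < lam \<longrightarrow> u (lam * n + j) = th (u n) j"
    and column: "j < lam ^ k" "\<And>a. sub_iter th lam k a j = b"
    and "n mod lam ^ (k * M) \<notin> digits_avoiding (lam ^ k) j M"
  shows "u (n mod lam ^ (k * M)) = u n"
proof -
  have power_k: "lam ^ (k * i) = (lam ^ k) ^ i" for i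
    by (simp add: power_mult)
  have "n mod lam ^ (k * M) < (lam ^ k) ^ M"
    using \<open>lam > 0\<close> by (simp add: power_k)
  then obtain i where "i < M"
    and truncated_digit: "(n mod lam ^ (k * M) div lam ^ (k * i)) mod lam ^ k = j"
    using assms(5) by (auto simp: digits_avoiding_def power_k)
  then have "(n div lam ^ (k * i)) mod lam ^ k = j"
    by (simp add: power_k digit_of_mod_power)
  moreover have "n mod lam ^ (k * M) mod lam ^ (k * i) = n mod lam ^ (k * i)"
    using \<open>i < M\<close> by (simp add: power_k mod_mod_cancel le_imp_power_dvd)
  ultimately show ?thesis
    using fixed_point_at_constant_digit[OF \<open>lam > 0\<close> fixed column] truncated_digit by metis
qed

lemma weyl_dist_fixed_point_truncation_le:
  assumes "lam > 0"
    and fixed: "\<forall>n j. j < lam \<longrightarrow> u (lam * n + j) = th (u n) j"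
    and column: "j < lam ^ k" "\<And>a. sub_iter th lam k a j = b"
  shows "weyl_dist u (\<lambda>n. u (n mod lam ^ (k * M)))
      \<le> ereal (((real (lam ^ k) - 1) / real (lam ^ k)) ^ M)"
proof -
  let ?B = "digits_avoiding (lam ^ k) j M"
  have "n mod lam ^ (k * M) \<in> ?B" if "u n \<noteq> u (n mod lam ^ (k * M))" for n
    using fixed_point_eq_at_truncation[OF assms, of n M] that by metis
  then have "weyl_dist u (\<lambda>n. u (n mod lam ^ (k * M))) \<le> ereal (card ?B / lam ^ (k * M))"
    using \<open>lam > 0\<close> by (intro weyl_dist_le_of_defects_mod) (simp_all add: finite_digits_avoiding)
  also have "\<dots> \<le> ereal (((real (lam ^ k) - 1) / real (lam ^ k)) ^ M)"
  proof -
    have "real (card ?B) \<le> real ((lam ^ k - 1) ^ M)"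
      using card_digits_avoiding_le[OF column(1)] by (simp only: of_nat_le_iff)
    also have "\<dots> = (real (lam ^ k) - 1) ^ M"
      using \<open>lam > 0\<close> by (simp add: Suc_leI)
    finally show ?thesis
      by (simp add: power_divide power_mult divide_right_mono)
  qed
  finally show ?thesis .
qed

theorem mainTheorem8:
  fixes th :: "'a::finite \<Rightarrow> nat \<Rightarrow> 'a" and lam :: nat and a0 :: 'a and u :: "nat \<Rightarrow> 'a"
  assumes "lam \<ge> 2"
    and "primitive th lam"
    and "th a0 0 = a0"
    and "inj_letters th lam"
    and "infinite (subshift th lam)"
    and "column_number th lam = 1"
    and "u 0 = a0"
    and "\<forall>n j. j < lam \<longrightarrow> u (lam * n + j) = th (u n) j"
  shows "weyl_rap u \<and>
    (\<forall>\<epsilon>>0. \<exists>k\<ge>1. \<exists>w. periodic_seq w (lam^k) \<and> weyl_dist u w < ereal \<epsilon>)"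
proof -
  have "lam > 0" using assms(1) by simp
  obtain k j b where "k \<ge> 1" and column: "j < lam ^ k" "\<And>a. sub_iter th lam k a j = b"
    using column_number_oneE[OF \<open>lam > 0\<close> assms(6)] by blast
  define x where "x = (real (lam ^ k) - 1) / real (lam ^ k)"
  have "real (lam ^ k) \<ge> 1"
    using \<open>lam > 0\<close> by (simp add: Suc_leI)
  then have "0 \<le> x" "x < 1"
    unfolding x_def by (simp_all add: divide_less_eq)
  have "\<exists>k\<ge>1. \<exists>w. periodic_seq w (lam ^ k) \<and> weyl_dist u w < ereal \<epsilon>"
    if "\<epsilon> > 0" for \<epsilon>
  proof -
    obtain M where "x ^ M < \<epsilon>"
      using real_arch_pow_inv[OF \<open>\<epsilon> > 0\<close> \<open>x < 1\<close>] by blast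
    then have "x ^ Suc M < \<epsilon>"
      using power_decreasing[of M "Suc M" x] \<open>0 \<le> x\<close> \<open>x < 1\<close> by simp
    then have "weyl_dist u (\<lambda>n. u (n mod lam ^ (k * Suc M))) < ereal \<epsilon>"
      using weyl_dist_fixed_point_truncation_le[OF \<open>lam > 0\<close> assms(8) column, of "Suc M"]
      unfolding x_def by (simp add: le_less_trans)
    moreover have "periodic_seq (\<lambda>n. u (n mod lam ^ (k * Suc M))) (lam ^ (k * Suc M))"
      using \<open>lam > 0\<close> by (simp add: periodic_seq_def)
    ultimately show ?thesis
      using \<open>k \<ge> 1\<close> by (intro exI[of _ "k * Suc M"]) auto
  qed
  then show ?thesis
    unfolding weyl_rap_def by blast
qed

end
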